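(* Suppose $G_{\text{hon}}$ is connected. For each $l\in[n]$ let $\bar\tau(l)=\inf\{j\in\mathbb N:|\bar{\mathcal I}_j|=l\}$. Then for all $l,j\in\mathbb N$ with $l\le n$, $$\mathbb P(\bar\tau(l)>lj)\le l\,(1-\Upsilon/\bar d_{\text{hon}})^j.$$
   Context: $G=([n+m],E)$ undirected, honest agents $[n]$; for $i\in[n]$, $N_{\text{hon}}(i)$ its honest neighbors, $d_{\text{hon}}(i)=|N_{\text{hon}}(i)|$, $d(i)$ its total degree, $\bar d_{\text{hon}}=\max_{i\in[n]}d_{\text{hon}}(i)$; $G_{\text{hon}}$ the honest subgraph; $\Upsilon=\min_{i\in[n]}d_{\text{hon}}(i)/d(i)$; $i^\star\in[n]$ fixed. Noisy rumor process: independent $\bar Y_j^{(i)}\sim$Bernoulli$(\Upsilon)$, $\bar H_j^{(i)}\sim$Uniform$(N_{\text{hon}}(i))$; $\bar{\mathcal I}_0=\{i^\star\}$, $\bar{\mathcal I}_j=\bar{\mathcal I}_{j-1}\cup\{i\notin\bar{\mathcal I}_{j-1}:\bar Y_j^{(i)}=1,\bar H_j^{(i)}\in\bar{\mathcal I}_{j-1}\}$ for $j\ge1$. (Convention: $\bar\tau(1)=1$, i.e. the infimum is over $j\ge1$.) *)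

theory Defs
  imports "HOL-Probability.Probability"
begin

text \<open>Graph on vertices {1..n+m}, given by an edge relation E; honest agents are {1..n}.\<close>

definition deg :: "(nat \<Rightarrow> nat \<Rightarrow> bool) \<Rightarrow> nat \<Rightarrow> nat \<Rightarrow> nat \<Rightarrow> nat" where
  "deg E n m i = card {v \<in> {1..n+m}. E i v}"

definition Nhon :: "(nat \<Rightarrow> nat \<Rightarrow> bool) \<Rightarrow> nat \<Rightarrow> nat \<Rightarrow> nat set" where
  "Nhon E n i = {v \<in> {1..n}. E i v}"

definition dhon :: "(nat \<Rightarrow> nat \<Rightarrow> bool) \<Rightarrow> nat \<Rightarrow> nat \<Rightarrow> nat" where
  "dhon E n i = card (Nhon E n i)"

definition dhon_max :: "(nat \<Rightarrow> nat \<Rightarrow> bool) \<Rightarrow> nat \<Rightarrow> nat" where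
  "dhon_max E n = Max (dhon E n ` {1..n})"

definition Upsilon :: "(nat \<Rightarrow> nat \<Rightarrow> bool) \<Rightarrow> nat \<Rightarrow> nat \<Rightarrow> real" where
  "Upsilon E n m = Min ((\<lambda>i. real (dhon E n i) / real (deg E n m i)) ` {1..n})"

definition hon_connected :: "(nat \<Rightarrow> nat \<Rightarrow> bool) \<Rightarrow> nat \<Rightarrow> bool" where
  "hon_connected E n \<longleftrightarrow>
     (\<forall>u\<in>{1..n}. \<forall>v\<in>{1..n}.
        (u, v) \<in> ({(a, b). a \<in> {1..n} \<and> b \<in> {1..n} \<and> E a b})\<^sup>*)"

text \<open>Sample point: omega (j, i) = (Y_j^(i), H_j^(i)).\<close>
definition noisy_space ::
  "(nat \<Rightarrow> nat \<Rightarrow> bool) \<Rightarrow> nat \<Rightarrow> nat \<Rightarrow> (nat \<times> nat \<Rightarrow> bool \<times> nat) measure" where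
  "noisy_space E n m = PiM UNIV (\<lambda>(j, i).
      measure_pmf (pair_pmf (bernoulli_pmf (Upsilon E n m)) (pmf_of_set (Nhon E n i))))"

fun infected :: "nat \<Rightarrow> nat \<Rightarrow> (nat \<times> nat \<Rightarrow> bool \<times> nat) \<Rightarrow> nat \<Rightarrow> nat set" where
  "infected n istar \<omega> 0 = {istar}"
| "infected n istar \<omega> (Suc j) = infected n istar \<omega> j \<union>
     {i \<in> {1..n}. i \<notin> infected n istar \<omega> j \<and> fst (\<omega> (Suc j, i))
        \<and> snd (\<omega> (Suc j, i)) \<in> infected n istar \<omega> j}"

definition tau :: "nat \<Rightarrow> nat \<Rightarrow> (nat \<times> nat \<Rightarrow> bool \<times> nat) \<Rightarrow> nat \<Rightarrow> enat" where
  "tau n istar \<omega> l =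
     (if \<exists>j\<ge>1. card (infected n istar \<omega> j) \<ge> l
      then enat (LEAST j. j \<ge> 1 \<and> card (infected n istar \<omega> j) \<ge> l) else \<infinity>)"

end

theory Submission
  imports Defs
begin

text \<open>
  Cut the first l j rounds into l phases of j rounds. While the infected set S is a proper
  nonempty subset of the honest agents, connectivity of the honest subgraph gives an uninfected
  honest agent i with an infected neighbour, and i is infected in the next round with probability
  at least \<open>\<Upsilon> |N_hon(i) \<inter> S| / d_hon(i) \<ge> \<Upsilon> / d_hon_max\<close>. Hence a phase makes no
  progress with probability at most \<open>q^j\<close>, where \<open>q = 1 - \<Upsilon> / d_hon_max\<close>. Fewer than l
  agents are infected after all l phases only if some phase made no progress, and a union bound
  over the phases gives \<open>l q^j\<close>. The infected set is a Markov chain on sets, and every event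
  involved depends on only finitely many coordinates of the infinite product space.
\<close>

definition spread_round :: "nat \<Rightarrow> nat set \<Rightarrow> (nat \<Rightarrow> bool \<times> nat) \<Rightarrow> nat set" where
  "spread_round n S x = S \<union> {i \<in> {1..n}. i \<notin> S \<and> fst (x i) \<and> snd (x i) \<in> S}"

fun spread :: "nat \<Rightarrow> nat set \<Rightarrow> (nat \<times> nat \<Rightarrow> bool \<times> nat) \<Rightarrow> nat \<Rightarrow> nat set" where
  "spread n S \<omega> 0 = S"
| "spread n S \<omega> (Suc t) = spread_round n (spread n S \<omega> t) (\<lambda>i. \<omega> (Suc t, i))"

lemma infected_eq_spread: "infected n istar \<omega> t = spread n {istar} \<omega> t"
  by (induction t) (auto simp: spread_round_def)

lemma spread_round_cong:
  "(\<And>i. i \<in> {1..n} \<Longrightarrow> x i = y i) \<Longrightarrow> spread_round n S x = spread_round n S y"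
  unfolding spread_round_def by auto

lemma spread_cong:
  "(\<And>s i. s \<in> {1..t} \<Longrightarrow> i \<in> {1..n} \<Longrightarrow> \<omega> (s, i) = \<omega>' (s, i))
    \<Longrightarrow> spread n S \<omega> t = spread n S \<omega>' t"
proof (induction t)
  case 0
  then show ?case by simp
next
  case (Suc t)
  then have "spread n S \<omega> t = spread n S \<omega>' t" by auto
  moreover have "spread_round n T (\<lambda>i. \<omega> (Suc t, i)) = spread_round n T (\<lambda>i. \<omega>' (Suc t, i))" for T
    by (rule spread_round_cong) (use Suc.prems in auto)
  ultimately show ?case by simp
qed

lemma spread_mono: "s \<le> t \<Longrightarrow> spread n S \<omega> s \<subseteq> spread n S \<omega> t"
  by (induction t) (auto simp: spread_round_def le_Suc_eq)

lemma spread_subset: "spread n S \<omega> t \<subseteq> S \<union> {1..n}"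
  by (induction t) (auto simp: spread_round_def)

lemma finite_spread: "finite S \<Longrightarrow> finite (spread n S \<omega> t)"
  using spread_subset by (rule finite_subset) simp

subsection \<open>The infected set as a Markov chain\<close>

text \<open>
  \<open>K (t, i)\<close> is the law of agent i's sample \<open>(Y_t^(i), H_t^(i))\<close> in round t;
  \<open>spread_chain n K a S t\<close> is the law of the infected set after rounds \<open>a + 1, \<dots>, a + t\<close>
  started from S.
\<close>

definition round_pmf ::
  "nat \<Rightarrow> (nat \<times> nat \<Rightarrow> (bool \<times> nat) pmf) \<Rightarrow> nat \<Rightarrow> nat set \<Rightarrow> nat set pmf" where
  "round_pmf n K t S =
     map_pmf (\<lambda>g. spread_round n S (\<lambda>i. g (Suc t, i))) (Pi_pmf ({Suc t} \<times> {1..n}) (False, 0) K)"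

fun spread_chain ::
  "nat \<Rightarrow> (nat \<times> nat \<Rightarrow> (bool \<times> nat) pmf) \<Rightarrow> nat \<Rightarrow> nat set \<Rightarrow> nat \<Rightarrow> nat set pmf" where
  "spread_chain n K a S 0 = return_pmf S"
| "spread_chain n K a S (Suc t) = bind_pmf (spread_chain n K a S t) (round_pmf n K (a + t))"

lemma spread_chain_add:
  "spread_chain n K a S (b + c) = bind_pmf (spread_chain n K a S b) (\<lambda>T. spread_chain n K (a + b) T c)"
  by (induction c) (simp_all add: bind_return_pmf' bind_assoc_pmf add.assoc)

lemma set_pmf_round_pmf: "T \<in> set_pmf (round_pmf n K t S) \<Longrightarrow> S \<subseteq> T \<and> T \<subseteq> S \<union> {1..n}"
  unfolding round_pmf_def spread_round_def by auto

lemma set_pmf_spread_chain: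
  "T \<in> set_pmf (spread_chain n K a S t) \<Longrightarrow> S \<subseteq> T \<and> T \<subseteq> S \<union> {1..n}"
proof (induction t arbitrary: T)
  case 0
  then show ?case by simp
next
  case (Suc t)
  then obtain U where "U \<in> set_pmf (spread_chain n K a S t)" "T \<in> set_pmf (round_pmf n K (a + t) U)"
    by auto
  with Suc.IH set_pmf_round_pmf show ?case by blast
qed

definition sample_indices :: "nat \<Rightarrow> nat \<Rightarrow> (nat \<times> nat) set" where
  "sample_indices n t = {1..t} \<times> {1..n}"

lemma map_pmf_spread_eq_spread_chain:
  "map_pmf (\<lambda>\<omega>. spread n S \<omega> t) (Pi_pmf (sample_indices n t) (False, 0) K) = spread_chain n K 0 S t"
proof (induction t)
  case 0
  then show ?case by (simp add: sample_indices_def)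
next
  case (Suc t)
  let ?A = "sample_indices n t" and ?B = "{Suc t} \<times> {1..n}"
  have split: "sample_indices n (Suc t) = ?A \<union> ?B" "?A \<inter> ?B = {}" "finite ?A" "finite ?B"
    by (auto simp: sample_indices_def)
  have glue: "spread n S (\<lambda>x. if x \<in> ?A then f x else g x) (Suc t)
      = spread_round n (spread n S f t) (\<lambda>i. g (Suc t, i))" for f g
  proof -
    have "spread n S (\<lambda>x. if x \<in> ?A then f x else g x) t = spread n S f t"
      by (rule spread_cong) (auto simp: sample_indices_def)
    moreover have "spread_round n T (\<lambda>i. if (Suc t, i) \<in> ?A then f (Suc t, i) else g (Suc t, i))
        = spread_round n T (\<lambda>i. g (Suc t, i))" for T
      by (rule spread_round_cong) (auto simp: sample_indices_def)
    ultimately show ?thesis by simp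
  qed
  have "map_pmf (\<lambda>\<omega>. spread n S \<omega> (Suc t)) (Pi_pmf (sample_indices n (Suc t)) (False, 0) K)
     = map_pmf (\<lambda>(f, g). spread_round n (spread n S f t) (\<lambda>i. g (Suc t, i)))
         (pair_pmf (Pi_pmf ?A (False, 0) K) (Pi_pmf ?B (False, 0) K))"
    unfolding split(1) Pi_pmf_union[OF split(3,4,2)] pmf.map_comp o_def case_prod_unfold glue
    by (rule refl)
  also have "\<dots> = bind_pmf (map_pmf (\<lambda>f. spread n S f t) (Pi_pmf ?A (False, 0) K)) (round_pmf n K t)"
    by (simp add: pair_pmf_def map_bind_pmf bind_map_pmf round_pmf_def map_pmf_def
        bind_assoc_pmf bind_return_pmf)
  finally show ?case using Suc by simp
qed

lemma spread_chain_stay_le_power: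
  assumes stay: "\<And>t. emeasure (measure_pmf (round_pmf n K t S)) {S} \<le> ennreal q"
    and q: "0 \<le> q"
  shows "emeasure (measure_pmf (spread_chain n K a S j)) {S} \<le> ennreal (q ^ j)"
proof (induction j)
  case 0
  then show ?case by simp
next
  case (Suc j)
  have "emeasure (measure_pmf (spread_chain n K a S (Suc j))) {S}
      = (\<integral>\<^sup>+T. emeasure (measure_pmf (round_pmf n K (a + j) T)) {S} \<partial>measure_pmf (spread_chain n K a S j))"
    by simp
  also have "\<dots> \<le> (\<integral>\<^sup>+T. ennreal q * indicator {S} T \<partial>measure_pmf (spread_chain n K a S j))"
  proof (rule nn_integral_mono_AE, rule AE_pmfI)
    fix T
    assume T: "T \<in> set_pmf (spread_chain n K a S j)"
    show "emeasure (measure_pmf (round_pmf n K (a + j) T)) {S} \<le> ennreal q * indicator {S} T"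
    proof (cases "T = S")
      case True
      then show ?thesis using stay by simp
    next
      case False
      with set_pmf_spread_chain[OF T] have "S \<notin> set_pmf (round_pmf n K (a + j) T)"
        using set_pmf_round_pmf by blast
      then show ?thesis by (simp add: emeasure_pmf_single set_pmf_iff)
    qed
  qed
  also have "\<dots> = ennreal q * emeasure (measure_pmf (spread_chain n K a S j)) {S}"
    by (simp add: nn_integral_cmult_indicator)
  also have "\<dots> \<le> ennreal q * ennreal (q ^ j)"
    using Suc by (intro mult_left_mono) auto
  also have "\<dots> = ennreal (q ^ Suc j)"
    using q by (simp add: ennreal_mult[symmetric])
  finally show ?case .
qed

lemma spread_chain_card_less_eq_0:
  assumes "finite S" "l \<le> card S"
  shows "emeasure (measure_pmf (spread_chain n K a S t)) {T. card T < l} = 0"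
proof (rule null_setsD1, rule in_null_sets_measure_pmfI, rule ccontr)
  assume "{T. card T < l} \<inter> set_pmf (spread_chain n K a S t) \<noteq> {}"
  then obtain T where T: "T \<in> set_pmf (spread_chain n K a S t)" "card T < l" by auto
  with set_pmf_spread_chain[OF T(1)] assms(1) have "card S \<le> card T"
    by (intro card_mono) (auto intro: finite_subset)
  with T(2) assms(2) show False by simp
qed

text \<open>Each of the k phases of j rounds either infects a new agent or makes no progress at all.\<close>

lemma spread_chain_card_less_le:
  assumes stay: "\<And>t S. S \<subseteq> {1..n} \<Longrightarrow> S \<noteq> {} \<Longrightarrow> S \<noteq> {1..n}
      \<Longrightarrow> emeasure (measure_pmf (round_pmf n K t S)) {S} \<le> ennreal q"
    and q: "0 \<le> q"
  shows "S \<subseteq> {1..n} \<Longrightarrow> S \<noteq> {} \<Longrightarrow> l \<le> card S + k \<Longrightarrow> l \<le> n \<Longrightarrow>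
    emeasure (measure_pmf (spread_chain n K a S (k * j))) {T. card T < l} \<le> ennreal (real k * q ^ j)"
proof (induction k arbitrary: a S)
  case 0
  then show ?case by simp
next
  case (Suc k)
  have finS: "finite S" using Suc.prems(1) finite_subset by blast
  show ?case
  proof (cases "l \<le> card S")
    case True
    then show ?thesis using spread_chain_card_less_eq_0[OF finS] by simp
  next
    case False
    have "emeasure (measure_pmf (spread_chain n K a S (Suc k * j))) {T. card T < l}
        = (\<integral>\<^sup>+T. emeasure (measure_pmf (spread_chain n K (a + j) T (k * j))) {T. card T < l}
            \<partial>measure_pmf (spread_chain n K a S j))"
      by (simp add: spread_chain_add)
    also have "\<dots> \<le> (\<integral>\<^sup>+T. indicator {S} T + ennreal (real k * q ^ j) \<partial>measure_pmf (spread_chain n K a S j))"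
    proof (rule nn_integral_mono_AE, rule AE_pmfI)
      fix T
      assume T: "T \<in> set_pmf (spread_chain n K a S j)"
      show "emeasure (measure_pmf (spread_chain n K (a + j) T (k * j))) {T. card T < l}
          \<le> indicator {S} T + ennreal (real k * q ^ j)"
      proof (cases "T = S")
        case True
        then show ?thesis by (simp add: measure_pmf.emeasure_le_1 add_increasing2)
      next
        case False
        with set_pmf_spread_chain[OF T] Suc.prems(1) have T': "S \<subset> T" "T \<subseteq> {1..n}" by auto
        then have "card S < card T" by (intro psubset_card_mono) (auto intro: finite_subset)
        with T' Suc.prems have "emeasure (measure_pmf (spread_chain n K (a + j) T (k * j))) {T. card T < l}
            \<le> ennreal (real k * q ^ j)"
          by (intro Suc.IH) auto
        then show ?thesis using False by simp
      qed
    qed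
    also have "\<dots> = emeasure (measure_pmf (spread_chain n K a S j)) {S} + ennreal (real k * q ^ j)"
      by (simp add: nn_integral_add measure_pmf.emeasure_space_1)
    also have "\<dots> \<le> ennreal (q ^ j) + ennreal (real k * q ^ j)"
      using False Suc.prems by (intro add_right_mono spread_chain_stay_le_power stay q) auto
    also have "\<dots> = ennreal (real (Suc k) * q ^ j)"
      using q by (simp add: ennreal_plus[symmetric] algebra_simps del: ennreal_plus)
    finally show ?thesis .
  qed
qed

subsection \<open>One round of the noisy rumour process\<close>

lemma rtrancl_leaves_set:
  assumes "(a, b) \<in> R\<^sup>*" "a \<in> S" "b \<notin> S"
  obtains x y where "x \<in> S" "y \<notin> S" "(x, y) \<in> R"
  using assms by (induction rule: rtrancl_induct) blast+

lemma hon_connected_boundary: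
  assumes sym: "\<And>u v. E u v \<Longrightarrow> E v u"
    and conn: "hon_connected E n"
    and S: "S \<subseteq> {1..n}" "S \<noteq> {}" "S \<noteq> {1..n}"
  obtains s i where "s \<in> S" "i \<in> {1..n} - S" "E i s"
proof -
  obtain u v where "u \<in> S" "v \<in> {1..n}" "v \<notin> S" using S by blast
  with conn S have "(u, v) \<in> {(a, b). a \<in> {1..n} \<and> b \<in> {1..n} \<and> E a b}\<^sup>*"
    unfolding hon_connected_def by auto
  then obtain s i where "s \<in> S" "i \<notin> S" "(s, i) \<in> {(a, b). a \<in> {1..n} \<and> b \<in> {1..n} \<and> E a b}"
    using \<open>u \<in> S\<close> \<open>v \<notin> S\<close> by (rule rtrancl_leaves_set)
  with sym that show thesis by blast
qed

lemma Upsilon_bounds: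
  assumes verts: "\<And>u v. E u v \<Longrightarrow> u \<in> {1..n+m} \<and> v \<in> {1..n+m}" and n: "1 \<le> n"
  shows "0 \<le> Upsilon E n m" "Upsilon E n m \<le> 1"
proof -
  let ?f = "\<lambda>i. real (dhon E n i) / real (deg E n m i)"
  have "Upsilon E n m \<in> ?f ` {1..n}" unfolding Upsilon_def using n by (intro Min_in) auto
  then obtain i where i: "Upsilon E n m = ?f i" by auto
  have "Nhon E n i \<subseteq> {v \<in> {1..n+m}. E i v}" unfolding Nhon_def by auto
  then have "dhon E n i \<le> deg E n m i" unfolding dhon_def deg_def by (intro card_mono) auto
  then show "0 \<le> Upsilon E n m" "Upsilon E n m \<le> 1" using i by (auto simp: divide_le_eq_1)
qed

lemma Upsilon_div_dhon_max_le_1: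
  assumes "\<And>u v. E u v \<Longrightarrow> u \<in> {1..n+m} \<and> v \<in> {1..n+m}" "1 \<le> n"
  shows "Upsilon E n m / real (dhon_max E n) \<le> 1"
proof (cases "dhon_max E n = 0")
  case False
  then have "1 \<le> real (dhon_max E n)" by simp
  moreover have "Upsilon E n m \<le> 1" by (rule Upsilon_bounds(2)[of E n m]) (use assms in auto)
  ultimately show ?thesis by (simp add: divide_le_eq)
qed simp

definition sample_pmf :: "(nat \<Rightarrow> nat \<Rightarrow> bool) \<Rightarrow> nat \<Rightarrow> nat \<Rightarrow> nat \<times> nat \<Rightarrow> (bool \<times> nat) pmf" where
  "sample_pmf E n m = (\<lambda>(t, i). pair_pmf (bernoulli_pmf (Upsilon E n m)) (pmf_of_set (Nhon E n i)))"

lemma measure_round_pmf_stay_le: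
  assumes i: "i \<in> {1..n} - S"
  shows "measure (measure_pmf (round_pmf n K t S)) {S} \<le> 1 - measure (measure_pmf (K (Suc t, i))) ({True} \<times> S)"
proof -
  let ?P = "Pi_pmf ({Suc t} \<times> {1..n}) (False, 0) K"
  have "(\<lambda>g. spread_round n S (\<lambda>i. g (Suc t, i))) -` {S} \<subseteq> {g. g (Suc t, i) \<in> - ({True} \<times> S)}"
    using i by (auto simp: spread_round_def mem_Times_iff)
  then have "measure (measure_pmf (round_pmf n K t S)) {S} \<le> measure (measure_pmf ?P) {g. g (Suc t, i) \<in> - ({True} \<times> S)}"
    unfolding round_pmf_def measure_map_pmf by (intro measure_pmf.finite_measure_mono) simp_all
  also have "\<dots> = measure (measure_pmf (map_pmf (\<lambda>g. g (Suc t, i)) ?P)) (- ({True} \<times> S))"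
    by (simp add: vimage_def)
  also have "map_pmf (\<lambda>g. g (Suc t, i)) ?P = K (Suc t, i)"
    using i by (subst Pi_pmf_component) auto
  finally show ?thesis
    by (simp add: measure_pmf.prob_compl[of "{True} \<times> S", symmetric] Compl_eq_Diff_UNIV)
qed

lemma measure_sample_pmf_infect_ge:
  assumes verts: "\<And>u v. E u v \<Longrightarrow> u \<in> {1..n+m} \<and> v \<in> {1..n+m}"
    and i: "i \<in> {1..n}" and s: "s \<in> S \<inter> {1..n}" "E i s"
  shows "Upsilon E n m / real (dhon_max E n) \<le> measure (measure_pmf (sample_pmf E n m (t, i))) ({True} \<times> S)"
proof -
  let ?U = "Upsilon E n m" and ?N = "Nhon E n i"
  have N: "finite ?N" "s \<in> ?N" "?N \<noteq> {}" using s by (auto simp: Nhon_def)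
  then have NS: "1 \<le> card (?N \<inter> S)" using s by (simp add: Suc_le_eq card_gt_0_iff) blast
  have ND: "card ?N \<le> dhon_max E n"
    unfolding dhon_max_def dhon_def using i by (intro Max_ge) auto
  have N1: "0 < card ?N" using N by (subst card_gt_0_iff) auto
  have U: "0 \<le> ?U" "?U \<le> 1" using Upsilon_bounds[of E n m] verts i by auto
  have "?U / dhon_max E n \<le> ?U / card ?N"
    using U ND N1 by (intro divide_left_mono) auto
  also have "\<dots> \<le> ?U * card (?N \<inter> S) / card ?N"
  proof (intro divide_right_mono)
    have "?U * 1 \<le> ?U * card (?N \<inter> S)" using NS U by (intro mult_left_mono) auto
    then show "?U \<le> ?U * card (?N \<inter> S)" by simp
  qed simp
  also have "\<dots> = measure (measure_pmf (sample_pmf E n m (t, i))) ({True} \<times> S)"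
    unfolding sample_pmf_def using U N
    by (auto simp: measure_pmf_prob_product measure_pmf_single measure_pmf_of_set)
  finally show ?thesis .
qed

lemma round_pmf_sample_pmf_stay_le:
  assumes sym: "\<And>u v. E u v \<Longrightarrow> E v u"
    and verts: "\<And>u v. E u v \<Longrightarrow> u \<in> {1..n+m} \<and> v \<in> {1..n+m}"
    and conn: "hon_connected E n"
    and S: "S \<subseteq> {1..n}" "S \<noteq> {}" "S \<noteq> {1..n}"
  shows "emeasure (measure_pmf (round_pmf n (sample_pmf E n m) t S)) {S}
    \<le> ennreal (1 - Upsilon E n m / real (dhon_max E n))"
proof -
  obtain s i where si: "s \<in> S" "i \<in> {1..n} - S" "E i s"
    using hon_connected_boundary[OF sym conn S] .
  have "measure (measure_pmf (round_pmf n (sample_pmf E n m) t S)) {S}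
      \<le> 1 - measure (measure_pmf (sample_pmf E n m (Suc t, i))) ({True} \<times> S)"
    by (rule measure_round_pmf_stay_le[OF si(2)])
  also have "\<dots> \<le> 1 - Upsilon E n m / real (dhon_max E n)"
    using measure_sample_pmf_infect_ge[of E n m i s S "Suc t"] verts si S by auto
  finally show ?thesis by (simp add: measure_pmf.emeasure_eq_measure ennreal_leI)
qed

subsection \<open>From the infinite product space to finitely many samples\<close>

lemma measure_PiM_eq_measure_Pi_pmf:
  fixes K :: "'i \<Rightarrow> 'b::countable pmf"
  assumes cong: "\<And>\<omega> \<omega>'. (\<And>x. x \<in> J \<Longrightarrow> \<omega> x = \<omega>' x) \<Longrightarrow> Q \<omega> = Q \<omega>'" and finJ: "finite J"
  shows "measure (PiM UNIV (\<lambda>x. measure_pmf (K x))) {\<omega> \<in> space (PiM UNIV (\<lambda>x. measure_pmf (K x))). Q \<omega>}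
        = measure_pmf.prob (Pi_pmf J d K) {f. Q f}"
proof -
  let ?M = "\<lambda>x. measure_pmf (K x)" and ?P = "measure_pmf (Pi_pmf J d K)"
  interpret product_prob_space ?M UNIV
    by unfold_locales (simp add: prob_space_measure_pmf)
  define X where "X = {x \<in> PiE J (\<lambda>_. UNIV). Q x}"
  have Q_restrict: "Q (restrict \<omega> J) = Q \<omega>" for \<omega> by (rule cong) simp
  have emb: "{\<omega> \<in> space (PiM UNIV ?M). Q \<omega>} = prod_emb UNIV ?M J X"
    using Q_restrict by (auto simp: prod_emb_def X_def space_PiM)
  have X: "X \<in> sets (PiM J ?M)"
  proof (rule sets.countable)
    fix a
    assume "a \<in> X"
    then have "a \<in> extensional J" by (simp add: X_def PiE_def)
    then have "{a} = PiE J (\<lambda>i. {a i})" by (simp add: PiE_singleton)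
    also have "\<dots> \<in> sets (PiM J ?M)" using finJ by (intro sets_PiM_I_finite) auto
    finally show "{a} \<in> sets (PiM J ?M)" .
  next
    have "countable (PiE J (\<lambda>_. UNIV :: 'b set))" using finJ by (intro countable_PiE) auto
    then show "countable X" unfolding X_def by (rule countable_subset[rotated]) auto
  qed
  have meas: "(\<lambda>f. restrict f J) \<in> measurable ?P (PiM J ?M)"
    by (auto simp: measurable_def space_PiM)
  have distr_eq: "distr ?P (PiM J ?M) (\<lambda>f. restrict f J) = PiM J ?M"
  proof (rule PiM_eqI[OF finJ])
    fix A
    assume A: "\<And>i. i \<in> J \<Longrightarrow> A i \<in> sets (?M i)"
    have "emeasure (distr ?P (PiM J ?M) (\<lambda>f. restrict f J)) (PiE J A)
        = emeasure ?P ((\<lambda>f. restrict f J) -` PiE J A \<inter> space ?P)"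
      using A finJ by (intro emeasure_distr meas sets_PiM_I_finite) auto
    also have "(\<lambda>f. restrict f J) -` PiE J A \<inter> space ?P = Pi J A"
      by (auto simp: PiE_def Pi_def)
    also have "emeasure ?P (Pi J A) = (\<Prod>x\<in>J. emeasure (?M x) (A x))"
      using finJ by (simp add: measure_pmf.emeasure_eq_measure measure_Pi_pmf_Pi prod_ennreal)
    finally show "emeasure (distr ?P (PiM J ?M) (\<lambda>f. restrict f J)) (PiE J A)
        = (\<Prod>x\<in>J. emeasure (?M x) (A x))" .
  qed simp
  have "measure (PiM UNIV ?M) {\<omega> \<in> space (PiM UNIV ?M). Q \<omega>} = measure (PiM J ?M) X"
    unfolding emb measure_def using emeasure_PiM_emb'[of J X] finJ X by simp
  also have "\<dots> = measure ?P ((\<lambda>f. restrict f J) -` X \<inter> space ?P)"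
    by (subst distr_eq[symmetric]) (rule measure_distr[OF meas X])
  also have "(\<lambda>f. restrict f J) -` X \<inter> space ?P = {f. Q f}"
    using Q_restrict by (auto simp: X_def)
  finally show ?thesis .
qed

lemma tau_gt_iff_card_spread_less:
  assumes "1 \<le> N"
  shows "tau n istar \<omega> l > enat N \<longleftrightarrow> card (spread n {istar} \<omega> N) < l"
proof -
  let ?c = "\<lambda>t. card (spread n {istar} \<omega> t)"
  have mono: "s \<le> t \<Longrightarrow> ?c s \<le> ?c t" for s t
    by (intro card_mono finite_spread spread_mono) auto
  show ?thesis
  proof (cases "\<exists>t\<ge>1. l \<le> ?c t")
    case True
    let ?t0 = "LEAST t. t \<ge> 1 \<and> l \<le> ?c t"
    have t0: "?t0 \<ge> 1 \<and> l \<le> ?c ?t0" using True by (rule LeastI_ex)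
    have "N < ?t0 \<longleftrightarrow> ?c N < l"
    proof
      assume "N < ?t0"
      then show "?c N < l" using assms by (metis (no_types, lifting) not_less not_less_Least)
    next
      assume "?c N < l"
      then show "N < ?t0" using t0 mono by (meson leD le_trans not_less)
    qed
    then show ?thesis using True by (simp add: tau_def infected_eq_spread)
  next
    case False
    then show ?thesis using assms by (auto simp: tau_def infected_eq_spread)
  qed
qed

lemma prob_tau_gt_eq_spread_chain:
  assumes "1 \<le> N"
  shows "measure (noisy_space E n m) {\<omega> \<in> space (noisy_space E n m). tau n istar \<omega> l > enat N}
    = measure_pmf.prob (spread_chain n (sample_pmf E n m) 0 {istar} N) {T. card T < l}"
proof -
  have space: "noisy_space E n m = PiM UNIV (\<lambda>x. measure_pmf (sample_pmf E n m x))"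
    unfolding noisy_space_def sample_pmf_def by (intro arg_cong[where f = "PiM UNIV"]) (auto simp: fun_eq_iff)
  have tau_event: "tau n istar \<omega> l > enat N \<longleftrightarrow> card (spread n {istar} \<omega> N) < l" for \<omega>
    using tau_gt_iff_card_spread_less[OF assms] .
  have "measure (noisy_space E n m) {\<omega> \<in> space (noisy_space E n m). tau n istar \<omega> l > enat N}
    = measure_pmf.prob (Pi_pmf (sample_indices n N) (False, 0) (sample_pmf E n m))
        {\<omega>. card (spread n {istar} \<omega> N) < l}"
    unfolding space tau_event
  proof (rule measure_PiM_eq_measure_Pi_pmf)
    fix \<omega> \<omega>' :: "nat \<times> nat \<Rightarrow> bool \<times> nat"
    assume "\<And>x. x \<in> sample_indices n N \<Longrightarrow> \<omega> x = \<omega>' x"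
    then have "spread n {istar} \<omega> N = spread n {istar} \<omega>' N"
      by (intro spread_cong) (auto simp: sample_indices_def)
    then show "card (spread n {istar} \<omega> N) < l \<longleftrightarrow> card (spread n {istar} \<omega>' N) < l" by simp
  qed (simp add: sample_indices_def)
  also have "\<dots> = measure_pmf.prob (spread_chain n (sample_pmf E n m) 0 {istar} N) {T. card T < l}"
    by (simp flip: map_pmf_spread_eq_spread_chain)
  finally show ?thesis .
qed

theorem mainTheorem15:
  fixes E :: "nat \<Rightarrow> nat \<Rightarrow> bool" and n m istar l j :: nat
  assumes sym: "\<And>u v. E u v \<Longrightarrow> E v u"
    and irrefl: "\<And>u. \<not> E u u"
    and verts: "\<And>u v. E u v \<Longrightarrow> u \<in> {1..n+m} \<and> v \<in> {1..n+m}"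
    and istar: "istar \<in> {1..n}"
    and conn: "hon_connected E n"
    and l: "1 \<le> l" "l \<le> n"
  shows "measure (noisy_space E n m)
           {\<omega> \<in> space (noisy_space E n m). tau n istar \<omega> l > enat (l * j)}
         \<le> real l * (1 - Upsilon E n m / real (dhon_max E n)) ^ j"
proof (cases "j = 0")
  case True
  have "prob_space (noisy_space E n m)"
    unfolding noisy_space_def by (auto intro: prob_space_PiM prob_space_measure_pmf)
  then have "measure (noisy_space E n m) {\<omega> \<in> space (noisy_space E n m). tau n istar \<omega> l > enat (l * j)} \<le> 1"
    by (rule prob_space.prob_le_1)
  with l True show ?thesis by simp
next
  case False
  let ?q = "1 - Upsilon E n m / real (dhon_max E n)"
  have q: "0 \<le> ?q" using Upsilon_div_dhon_max_le_1[OF verts] l by simp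
  have "emeasure (measure_pmf (spread_chain n (sample_pmf E n m) 0 {istar} (l * j))) {T. card T < l}
      \<le> ennreal (real l * ?q ^ j)"
    by (rule spread_chain_card_less_le[OF round_pmf_sample_pmf_stay_le[OF sym verts conn] q])
      (use istar l in auto)
  with q show ?thesis
    using prob_tau_gt_eq_spread_chain[of "l * j"] False l
    by (simp add: measure_pmf.emeasure_eq_measure ennreal_le_iff)
qed

end
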